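(* Consider an unreplicated completely randomized design ($N_q=1$ for all $q$, so $Q=N$) with $S(q,q)>0$ for all $q$, and a grouping $\{\langle g\rangle\}_{g=1}^G$. Then for each group, $\mathbb E\{\hat Y_{\langle g\rangle}\}=\overline Y_{\langle g\rangle}$, where $\overline Y_{\langle g\rangle}=|\langle g\rangle|^{-1}\sum_{q\in\langle g\rangle}\overline Y(q)$. If moreover Condition 5 holds, then for every $q$, with $\langle g\rangle$ the group containing $q$, $$\mathbb E\{\hat V_{\hat Y}(q,q)\}\ge S(q,q)+\Omega(q,q)+\mu_{\langle g\rangle}(\overline Y(q)-\overline Y_{\langle g\rangle})^2,$$ where $$\Omega(q,q)=\mu_{\langle g\rangle}|\langle g\rangle|^{-2}\Big(1-\frac{\varrho_{\langle g\rangle}}N-\frac{|\langle g\rangle|-1}N\Big)\sum_{q'\in\langle g\rangle,q'\neq q}S(q',q')\ \ge0.$$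
   Context: Randomization model with $N$ units and $Q$ treatment levels; unit $i$ has fixed real potential outcomes $Y_i(1),\dots,Y_i(Q)$. Unreplicated complete randomization: $N_q=1$ for all $q$ and the assignment is a uniformly random bijection between units and levels; $Y_q$ denotes the observed outcome of the unique unit assigned to level $q$. $\overline Y(q)=N^{-1}\sum_iY_i(q)$, $S(q,q')=(N-1)^{-1}\sum_i(Y_i(q)-\overline Y(q))(Y_i(q')-\overline Y(q'))$, and $S^\star(q,q')=S(q,q')/\sqrt{S(q,q)S(q',q')}$. Grouping: a fixed (data-independent) partition $[Q]=\bigcup_{g=1}^G\langle g\rangle$ into disjoint groups with $|\langle g\rangle|\ge2$. For each group, $\hat Y_{\langle g\rangle}=|\langle g\rangle|^{-1}\sum_{q\in\langle g\rangle}Y_q$, $\mu_{\langle g\rangle}=(1-2N^{-1})^{-1}(1-|\langle g\rangle|^{-1})^{-2}$, and for $q\in\langle g\rangle$, $\hat V_{\hat Y}(q,q)=\mu_{\langle g\rangle}(Y_q-\hat Y_{\langle g\rangle})^2$. $\varrho_{\langle g\rangle}$ is the largest eigenvalue of $(S^\star(q,q'))_{q,q'\in\langle g\rangle}$. Condition 5: $N-\varrho_{\langle g\rangle}-(|\langle g\rangle|-1)\ge0$ for all groups. *)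

theory Defs
  imports Complex_Main "HOL-Combinatorics.Permutations"
begin

(* Units and treatment levels are both indexed by {..<N} (Q = N).
   Y i q is the potential outcome Y_i(q) of unit i under level q. *)

definition Ybar :: "nat \<Rightarrow> (nat \<Rightarrow> nat \<Rightarrow> real) \<Rightarrow> nat \<Rightarrow> real" where
  "Ybar N Y q = (\<Sum>i<N. Y i q) / real N"

definition Scov :: "nat \<Rightarrow> (nat \<Rightarrow> nat \<Rightarrow> real) \<Rightarrow> nat \<Rightarrow> nat \<Rightarrow> real" where
  "Scov N Y q q' = (\<Sum>i<N. (Y i q - Ybar N Y q) * (Y i q' - Ybar N Y q')) / (real N - 1)"

definition Scorr :: "nat \<Rightarrow> (nat \<Rightarrow> nat \<Rightarrow> real) \<Rightarrow> nat \<Rightarrow> nat \<Rightarrow> real" where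
  "Scorr N Y q q' = Scov N Y q q' / sqrt (Scov N Y q q * Scov N Y q' q')"

(* Assignment: sigma q is the unit assigned to level q; sigma is a uniformly
   random permutation of {..<N}. *)
definition obs :: "(nat \<Rightarrow> nat \<Rightarrow> real) \<Rightarrow> (nat \<Rightarrow> nat) \<Rightarrow> nat \<Rightarrow> real" where
  "obs Y \<sigma> q = Y (\<sigma> q) q"

definition Eperm :: "nat \<Rightarrow> ((nat \<Rightarrow> nat) \<Rightarrow> real) \<Rightarrow> real" where
  "Eperm N f = (\<Sum>\<sigma>\<in>{\<sigma>. \<sigma> permutes {..<N}}. f \<sigma>) / fact N"

definition grouping :: "nat \<Rightarrow> nat set set \<Rightarrow> bool" where
  "grouping N P \<longleftrightarrow> \<Union>P = {..<N} \<and> (\<forall>g\<in>P. card g \<ge> 2)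
     \<and> (\<forall>g\<in>P. \<forall>h\<in>P. g \<noteq> h \<longrightarrow> g \<inter> h = {})"

definition Yhat_grp :: "(nat \<Rightarrow> nat \<Rightarrow> real) \<Rightarrow> nat set \<Rightarrow> (nat \<Rightarrow> nat) \<Rightarrow> real" where
  "Yhat_grp Y g \<sigma> = (\<Sum>q\<in>g. obs Y \<sigma> q) / real (card g)"

definition Ybar_grp :: "nat \<Rightarrow> (nat \<Rightarrow> nat \<Rightarrow> real) \<Rightarrow> nat set \<Rightarrow> real" where
  "Ybar_grp N Y g = (\<Sum>q\<in>g. Ybar N Y q) / real (card g)"

definition mu_grp :: "nat \<Rightarrow> nat set \<Rightarrow> real" where
  "mu_grp N g = inverse ((1 - 2 / real N) * (1 - 1 / real (card g))^2)"

definition Vhat :: "nat \<Rightarrow> (nat \<Rightarrow> nat \<Rightarrow> real) \<Rightarrow> nat set \<Rightarrow> nat \<Rightarrow> (nat \<Rightarrow> nat) \<Rightarrow> real" where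
  "Vhat N Y g q \<sigma> = mu_grp N g * (obs Y \<sigma> q - Yhat_grp Y g \<sigma>)^2"

definition eigenvalues_on :: "nat set \<Rightarrow> (nat \<Rightarrow> nat \<Rightarrow> real) \<Rightarrow> real set" where
  "eigenvalues_on g M = {l. \<exists>v. (\<exists>q\<in>g. v q \<noteq> 0) \<and>
       (\<forall>q\<in>g. (\<Sum>q'\<in>g. M q q' * v q') = l * v q)}"

definition rho_grp :: "nat \<Rightarrow> (nat \<Rightarrow> nat \<Rightarrow> real) \<Rightarrow> nat set \<Rightarrow> real" where
  "rho_grp N Y g = Max (eigenvalues_on g (Scorr N Y))"

definition Omega :: "nat \<Rightarrow> (nat \<Rightarrow> nat \<Rightarrow> real) \<Rightarrow> nat set \<Rightarrow> nat \<Rightarrow> real" where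
  "Omega N Y g q = mu_grp N g / real (card g)^2
     * (1 - rho_grp N Y g / real N - (real (card g) - 1) / real N)
     * (\<Sum>q'\<in>g - {q}. Scov N Y q' q')"

definition condition5 :: "nat \<Rightarrow> (nat \<Rightarrow> nat \<Rightarrow> real) \<Rightarrow> nat set set \<Rightarrow> bool" where
  "condition5 N Y P \<longleftrightarrow> (\<forall>g\<in>P. real N - rho_grp N Y g - (real (card g) - 1) \<ge> 0)"

end

theory Submission
  imports Defs "HOL-Analysis.Function_Topology" "HOL-Analysis.Convex"
    "Jordan_Normal_Form.Spectral_Radius"
begin

text \<open>
  With the contrast c = e_q - 1/|g| on g we have obs_q - Yhat_g = \<Sum> c_p obs_p, and the first
  two moments of the uniform permutation give
  E Vhat = mu ((\<Sum> c_p Ybar_p)^2 + \<Sum> c_p^2 S_pp - c' S c / N).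
  Splitting c into its q-part and its part on g - {q} bounds c' S c by
  2 (1 - 1/|g|)^2 S_qq + 2 K / |g|^2, where K is the total covariance on g - {q}.
  K is bounded twice: by Cauchy-Schwarz, K \<le> (|g| - 1) \<Sum> S_pp, and by the Rayleigh quotient
  of the correlation matrix at the vector (sqrt S_pp), K \<le> \<rho> \<Sum> S_pp; averaging the two
  bounds produces the factor 1 - \<rho>/N - (|g| - 1)/N of Omega.
  For N = 2 the factor 1 - 2/N in mu vanishes (so mu = inverse 0 = 0 and the bound fails),
  but then Condition 5 cannot hold: the covariance matrix of two units has rank one, so the
  correlation matrix has largest eigenvalue 1 + |r| > 1.
\<close>

section \<open>Rayleigh quotients and the largest eigenvalue\<close>

definition quad_form :: "(nat \<Rightarrow> nat \<Rightarrow> real) \<Rightarrow> nat set \<Rightarrow> (nat \<Rightarrow> real) \<Rightarrow> real" where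
  "quad_form M g x = (\<Sum>p\<in>g. x p * (\<Sum>p'\<in>g. M p p' * x p'))"

lemma quad_form_cong:
  assumes "\<And>p. p \<in> g \<Longrightarrow> x p = y p"
  shows "quad_form M g x = quad_form M g y"
  unfolding quad_form_def using assms by (intro sum.cong refl) (auto intro!: sum.cong)

lemma quad_form_scaleR: "quad_form M g (\<lambda>p. c * x p) = c\<^sup>2 * quad_form M g x"
  unfolding quad_form_def power2_eq_square
  by (simp add: sum_distrib_left algebra_simps)

lemma quad_form_add_scaled:
  assumes sym: "\<And>p p'. p \<in> g \<Longrightarrow> p' \<in> g \<Longrightarrow> M p p' = M p' p"
  shows "quad_form M g (\<lambda>p. x p + t * v p)
    = quad_form M g x + 2 * t * (\<Sum>p\<in>g. v p * (\<Sum>p'\<in>g. M p p' * x p')) + t\<^sup>2 * quad_form M g v"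
proof -
  have "(\<Sum>p\<in>g. x p * (\<Sum>p'\<in>g. M p p' * v p')) = (\<Sum>p'\<in>g. \<Sum>p\<in>g. x p * M p p' * v p')"
    by (subst sum.swap) (simp add: sum_distrib_left mult.assoc)
  also have "\<dots> = (\<Sum>p\<in>g. v p * (\<Sum>p'\<in>g. M p p' * x p'))"
    using sym by (auto simp: sum_distrib_left algebra_simps intro!: sum.cong)
  finally have cross: "(\<Sum>p\<in>g. x p * (\<Sum>p'\<in>g. M p p' * v p'))
      = (\<Sum>p\<in>g. v p * (\<Sum>p'\<in>g. M p p' * x p'))" .
  have "quad_form M g (\<lambda>p. x p + t * v p) = quad_form M g x
      + t * (\<Sum>p\<in>g. x p * (\<Sum>p'\<in>g. M p p' * v p'))
      + t * (\<Sum>p\<in>g. v p * (\<Sum>p'\<in>g. M p p' * x p')) + t\<^sup>2 * quad_form M g v"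
    unfolding quad_form_def power2_eq_square
    by (simp add: algebra_simps sum.distrib sum_distrib_left)
  then show ?thesis unfolding cross by simp
qed

lemma linear_coeff_eq_0_if_quadratic_nonneg:
  fixes a b :: real
  assumes "\<And>t. 0 \<le> 2 * t * a + t\<^sup>2 * b"
  shows "a = 0"
proof (rule ccontr)
  assume a: "a \<noteq> 0"
  define B where "B = \<bar>b\<bar> + 1"
  have B: "B \<ge> 1" unfolding B_def by simp
  define t where "t = - a / B"
  have "0 \<le> 2 * t * a + t\<^sup>2 * b" by (rule assms)
  also have "\<dots> \<le> 2 * t * a + t\<^sup>2 * (B - 1)"
    unfolding B_def by (simp add: mult_left_mono)
  also have "\<dots> = - (a * a * (B + 1) / (B * B))"
    unfolding t_def using B by (simp add: field_simps power2_eq_square)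
  also have "\<dots> < 0"
  proof -
    have "0 < a * a" using a by (auto simp: zero_less_mult_iff)
    moreover have "0 < (B + 1) / (B * B)" using B by simp
    ultimately have "0 < a * a * ((B + 1) / (B * B))" by (rule mult_pos_pos)
    then show ?thesis by simp
  qed
  finally show False by simp
qed

lemma finite_eigenvalues_on:
  assumes "finite g"
  shows "finite (eigenvalues_on g M)"
proof -
  define xs where "xs = sorted_list_of_set g"
  define m where "m = length xs"
  define A :: "real mat" where "A = mat m m (\<lambda>(i, j). M (xs ! i) (xs ! j))"
  have A: "A \<in> carrier_mat m m" unfolding A_def by simp
  have setxs: "set xs = g" and "distinct xs" using assms unfolding xs_def by auto
  then have bij: "bij_betw ((!) xs) {..<m} g"
    using bij_betw_nth m_def by fastforce
  have "eigenvalues_on g M \<subseteq> spectrum A"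
  proof
    fix l assume "l \<in> eigenvalues_on g M"
    then obtain v where nz: "\<exists>q\<in>g. v q \<noteq> 0"
      and ev: "\<forall>q\<in>g. (\<Sum>q'\<in>g. M q q' * v q') = l * v q"
      unfolding eigenvalues_on_def by blast
    define w where "w = vec m (\<lambda>i. v (xs ! i))"
    obtain i where i: "i < m" "v (xs ! i) \<noteq> 0"
      using nz setxs unfolding m_def by (metis in_set_conv_nth)
    have "w \<noteq> 0\<^sub>v m" using i unfolding w_def by (metis index_vec index_zero_vec(1))
    moreover have "A *\<^sub>v w = l \<cdot>\<^sub>v w"
    proof (rule eq_vecI)
      fix i assume "i < dim_vec (l \<cdot>\<^sub>v w)"
      then have im: "i < m" unfolding w_def by simp
      have "(A *\<^sub>v w) $ i = (\<Sum>j<m. M (xs ! i) (xs ! j) * v (xs ! j))"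
        using im A unfolding A_def w_def by (simp add: scalar_prod_def atLeast0LessThan)
      also have "\<dots> = (\<Sum>q'\<in>g. M (xs ! i) q' * v q')"
        using sum.reindex_bij_betw[OF bij, of "\<lambda>q'. M (xs ! i) q' * v q'"] by simp
      also have "\<dots> = l * v (xs ! i)" using ev im setxs m_def by (metis nth_mem)
      finally show "(A *\<^sub>v w) $ i = (l \<cdot>\<^sub>v w) $ i" using im unfolding w_def by simp
    qed (simp add: w_def A_def)
    ultimately have "eigenvector A w l"
      using A unfolding eigenvector_def w_def by auto
    then show "l \<in> spectrum A" unfolding spectrum_def eigenvalue_def by blast
  qed
  then show ?thesis using card_finite_spectrum(1)[OF A] finite_subset by blast
qed

lemma quad_form_has_max_on_unit_sphere:
  assumes fin: "finite g" and ne: "g \<noteq> {}"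
  obtains x where "(\<Sum>p\<in>g. (x p)\<^sup>2) = 1"
    and "\<And>y. (\<Sum>p\<in>g. (y p)\<^sup>2) = 1 \<Longrightarrow> quad_form M g y \<le> quad_form M g x"
proof -
  define S where "S = (\<lambda>i. if i \<in> g then {-1..1::real} else {0})"
  define K where "K = PiE UNIV S \<inter> {x. (\<Sum>p\<in>g. (x p)\<^sup>2) = 1}"
  have "compactin euclidean (PiE UNIV S)"
    using compactin_PiE[of "\<lambda>i. euclidean" UNIV S] unfolding euclidean_product_topology
    by (auto simp: S_def compactin_euclidean_iff)
  moreover have "closed {x::nat \<Rightarrow> real. (\<Sum>p\<in>g. (x p)\<^sup>2) = 1}"
    by (intro closed_Collect_eq continuous_on_sum continuous_on_power
        continuous_on_product_coordinates continuous_on_const)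
  ultimately have "compact K"
    unfolding K_def by (simp add: compactin_euclidean_iff compact_Int_closed)
  \<comment> \<open>restricting a unit vector to g lands in K without changing the quadratic form\<close>
  have restrict: "(\<lambda>i. if i \<in> g then y i else 0) \<in> K" if "(\<Sum>p\<in>g. (y p)\<^sup>2) = 1" for y
  proof -
    have "(y i)\<^sup>2 \<le> 1" if "i \<in> g" for i
      using member_le_sum[of i g "\<lambda>p. (y p)\<^sup>2"] that fin \<open>(\<Sum>p\<in>g. (y p)\<^sup>2) = 1\<close> by simp
    then have "-1 \<le> y i \<and> y i \<le> 1" if "i \<in> g" for i
      using that abs_le_square_iff[of "y i" 1] by (simp add: abs_le_iff)
    then show ?thesis unfolding K_def S_def using that
      by (auto simp: PiE_def Pi_def extensional_def)
  qed
  obtain q0 where "q0 \<in> g" using ne by blast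
  define e where "e = (\<lambda>i. if i = q0 then 1 else 0::real)"
  have "(\<Sum>p\<in>g. (e p)\<^sup>2) = 1"
    using fin \<open>q0 \<in> g\<close> by (simp add: e_def if_distrib[of "\<lambda>z. z\<^sup>2"] cong: if_cong)
  then have "K \<noteq> {}" using restrict[of e] by blast
  moreover have "continuous_on K (quad_form M g)" unfolding quad_form_def
    by (intro continuous_on_sum continuous_on_mult continuous_on_const
        continuous_on_subset[OF continuous_on_product_coordinates]) auto
  ultimately obtain x where xK: "x \<in> K" and xmax: "\<forall>y\<in>K. quad_form M g y \<le> quad_form M g x"
    using continuous_attains_sup[OF \<open>compact K\<close>] by blast
  show ?thesis
  proof (rule that)
    show "(\<Sum>p\<in>g. (x p)\<^sup>2) = 1" using xK unfolding K_def by simp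
    fix y :: "nat \<Rightarrow> real" assume "(\<Sum>p\<in>g. (y p)\<^sup>2) = 1"
    then have "quad_form M g (\<lambda>i. if i \<in> g then y i else 0) \<le> quad_form M g x"
      using xmax restrict by blast
    moreover have "quad_form M g (\<lambda>i. if i \<in> g then y i else 0) = quad_form M g y"
      by (rule quad_form_cong) simp
    ultimately show "quad_form M g y \<le> quad_form M g x" by simp
  qed
qed

lemma quad_form_le_if_le_on_unit_sphere:
  assumes fin: "finite g" and le: "\<And>y. (\<Sum>p\<in>g. (y p)\<^sup>2) = 1 \<Longrightarrow> quad_form M g y \<le> l"
  shows "quad_form M g z \<le> l * (\<Sum>p\<in>g. (z p)\<^sup>2)"
proof (cases "(\<Sum>p\<in>g. (z p)\<^sup>2) = 0")
  case True
  then have "\<forall>p\<in>g. z p = 0" using fin by (simp add: sum_nonneg_eq_0_iff)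
  then show ?thesis using True unfolding quad_form_def by simp
next
  case False
  define n where "n = (\<Sum>p\<in>g. (z p)\<^sup>2)"
  have n: "n > 0" using False unfolding n_def by (simp add: sum_nonneg order_le_neq_trans)
  have "(\<Sum>p\<in>g. (z p / sqrt n)\<^sup>2) = 1"
    using n unfolding n_def by (simp add: power_divide sum_divide_distrib[symmetric])
  then have "quad_form M g (\<lambda>p. inverse (sqrt n) * z p) \<le> l"
    using le by (simp add: divide_inverse mult.commute)
  then have "quad_form M g z / n \<le> l"
    unfolding quad_form_scaleR using n by (simp add: power_inverse divide_inverse mult.commute)
  then show ?thesis using n unfolding n_def by (simp add: pos_divide_le_eq mult.commute)
qed

lemma Rayleigh_maximizer_is_eigenvector:
  assumes fin: "finite g" and p: "p \<in> g"
    and sym: "\<And>p p'. p \<in> g \<Longrightarrow> p' \<in> g \<Longrightarrow> M p p' = M p' p"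
    and bound: "\<And>y. quad_form M g y \<le> quad_form M g x * (\<Sum>p\<in>g. (y p)\<^sup>2)"
    and unit: "(\<Sum>p\<in>g. (x p)\<^sup>2) = 1"
  shows "(\<Sum>p'\<in>g. M p p' * x p') = quad_form M g x * x p"
proof -
  define l where "l = quad_form M g x"
  define a where "a = (\<Sum>p'\<in>g. M p p' * x p')"
  define e where "e = (\<lambda>i. if i = p then 1 else 0 :: real)"
  have sum_e: "(\<Sum>i\<in>g. e i * f i) = f p" for f :: "nat \<Rightarrow> real"
    using fin p by (simp add: e_def if_distrib[of "\<lambda>z. z * _"] cong: if_cong)
  have "quad_form M g e = M p p"
    unfolding quad_form_def sum_e using sum_e[of "\<lambda>i. M p i"] by (simp add: mult.commute)
  then have qf: "quad_form M g (\<lambda>i. x i + t * e i) = l + 2 * t * a + t\<^sup>2 * M p p" for t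
    using quad_form_add_scaled[OF sym, where x = x and t = t and v = e] sum_e[of "\<lambda>i. \<Sum>p'\<in>g. M i p' * x p'"]
    unfolding l_def a_def by simp
  have norm: "(\<Sum>i\<in>g. (x i + t * e i)\<^sup>2) = 1 + 2 * t * x p + t\<^sup>2" for t
  proof -
    have "(\<Sum>i\<in>g. (x i + t * e i)\<^sup>2)
        = (\<Sum>i\<in>g. (x i)\<^sup>2) + 2 * t * (\<Sum>i\<in>g. e i * x i) + t\<^sup>2 * (\<Sum>i\<in>g. e i * e i)"
      by (simp add: power2_eq_square algebra_simps sum.distrib sum_distrib_left)
    then show ?thesis using unit sum_e[of x] sum_e[of e] by (simp add: e_def)
  qed
  have "0 \<le> 2 * t * (l * x p - a) + t\<^sup>2 * (l - M p p)" for t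
    using bound[of "\<lambda>i. x i + t * e i"] unfolding qf norm l_def[symmetric]
    by (simp add: algebra_simps)
  then have "l * x p - a = 0" by (rule linear_coeff_eq_0_if_quadratic_nonneg)
  then show ?thesis unfolding a_def l_def by simp
qed

lemma quad_form_le_Max_eigenvalues_on:
  assumes fin: "finite g" and ne: "g \<noteq> {}"
    and sym: "\<And>p p'. p \<in> g \<Longrightarrow> p' \<in> g \<Longrightarrow> M p p' = M p' p"
  shows "quad_form M g z \<le> Max (eigenvalues_on g M) * (\<Sum>p\<in>g. (z p)\<^sup>2)"
proof -
  obtain x where unit: "(\<Sum>p\<in>g. (x p)\<^sup>2) = 1"
    and max: "\<And>y. (\<Sum>p\<in>g. (y p)\<^sup>2) = 1 \<Longrightarrow> quad_form M g y \<le> quad_form M g x"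
    using quad_form_has_max_on_unit_sphere[OF fin ne] by blast
  define l where "l = quad_form M g x"
  have bound: "quad_form M g y \<le> l * (\<Sum>p\<in>g. (y p)\<^sup>2)" for y
    unfolding l_def using quad_form_le_if_le_on_unit_sphere[OF fin max] .
  have "\<exists>q\<in>g. x q \<noteq> 0"
  proof (rule ccontr)
    assume "\<not> (\<exists>q\<in>g. x q \<noteq> 0)"
    then have "(\<Sum>p\<in>g. (x p)\<^sup>2) = 0" by simp
    then show False using unit by simp
  qed
  then have "l \<in> eigenvalues_on g M"
    using Rayleigh_maximizer_is_eigenvector[OF fin _ sym bound[unfolded l_def] unit]
    unfolding eigenvalues_on_def l_def by blast
  then have "l \<le> Max (eigenvalues_on g M)" using finite_eigenvalues_on[OF fin] by simp
  then have "l * (\<Sum>p\<in>g. (z p)\<^sup>2) \<le> Max (eigenvalues_on g M) * (\<Sum>p\<in>g. (z p)\<^sup>2)"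
    by (intro mult_right_mono sum_nonneg) auto
  then show ?thesis using bound[of z] by linarith
qed

lemma quad_form_eq_on_support:
  assumes "finite g" "A \<subseteq> g" and zero: "\<And>p. p \<in> g - A \<Longrightarrow> x p = 0"
  shows "quad_form M g x = quad_form M A x"
proof -
  have "(\<Sum>p'\<in>g. M p p' * x p') = (\<Sum>p'\<in>A. M p p' * x p')" for p
    using assms by (intro sum.mono_neutral_right) auto
  then have "quad_form M g x = (\<Sum>p\<in>g. x p * (\<Sum>p'\<in>A. M p p' * x p'))"
    unfolding quad_form_def by simp
  also have "\<dots> = quad_form M A x"
    unfolding quad_form_def using assms by (intro sum.mono_neutral_right) auto
  finally show ?thesis .
qed

section \<open>Moments under a uniformly random permutation\<close>

lemma sum_permutes_apply:
  fixes h :: "nat \<Rightarrow> real"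
  assumes fin: "finite A" and q: "q \<in> A"
  shows "(\<Sum>\<sigma>\<in>{\<sigma>. \<sigma> permutes A}. h (\<sigma> q)) = fact (card A - 1) * (\<Sum>i\<in>A. h i)"
proof -
  define S where "S = A - {q}"
  have AS: "A = insert q S" and qS: "q \<notin> S" and finS: "finite S"
    using q fin unfolding S_def by auto
  have cS: "card S = card A - 1" using q fin unfolding S_def by simp
  have "(\<Sum>\<sigma>\<in>{\<sigma>. \<sigma> permutes A}. h (\<sigma> q))
      = (\<Sum>b\<in>insert q S. \<Sum>r\<in>{r. r permutes S}. h ((transpose q b \<circ> r) q))"
    unfolding AS by (rule sum_over_permutations_insert[OF finS qS])
  also have "\<dots> = (\<Sum>b\<in>insert q S. \<Sum>r\<in>{r. r permutes S}. h b)"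
    using qS by (intro sum.cong refl) (simp add: permutes_not_in)
  also have "\<dots> = (\<Sum>b\<in>A. fact (card A - 1) * h b)"
    unfolding AS[symmetric] using card_permutations[OF cS finS] by simp
  finally show ?thesis by (simp add: sum_distrib_left)
qed

lemma sum_permutes_apply2:
  fixes h :: "nat \<Rightarrow> nat \<Rightarrow> real"
  assumes fin: "finite A" and q: "q \<in> A" and q': "q' \<in> A" and "q \<noteq> q'"
  shows "(\<Sum>\<sigma>\<in>{\<sigma>. \<sigma> permutes A}. h (\<sigma> q) (\<sigma> q'))
    = fact (card A - 2) * (\<Sum>i\<in>A. \<Sum>j\<in>A - {i}. h i j)"
proof -
  define S where "S = A - {q}"
  have AS: "A = insert q S" and qS: "q \<notin> S" and finS: "finite S"
    using q fin unfolding S_def by auto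
  have cS: "card S - 1 = card A - 2" using q fin unfolding S_def by simp
  have q'S: "q' \<in> S" using q' \<open>q \<noteq> q'\<close> unfolding S_def by auto
  have image: "bij_betw (transpose q b) S (A - {b})" if "b \<in> A" for b
  proof -
    have "transpose q b ` S = transpose q b ` A - transpose q b ` {q}"
      unfolding S_def by (rule image_set_diff[OF inj_transpose])
    then show ?thesis using q that by (simp add: bij_betw_def)
  qed
  have "(\<Sum>\<sigma>\<in>{\<sigma>. \<sigma> permutes A}. h (\<sigma> q) (\<sigma> q'))
      = (\<Sum>b\<in>insert q S. \<Sum>r\<in>{r. r permutes S}.
           h ((transpose q b \<circ> r) q) ((transpose q b \<circ> r) q'))"
    unfolding AS by (rule sum_over_permutations_insert[OF finS qS])
  also have "\<dots> = (\<Sum>b\<in>A. \<Sum>r\<in>{r. r permutes S}. h b (transpose q b (r q')))"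
    unfolding AS[symmetric] using qS AS by (intro sum.cong refl) (simp add: permutes_not_in)
  also have "\<dots> = (\<Sum>b\<in>A. fact (card A - 2) * (\<Sum>c\<in>A - {b}. h b c))"
  proof (intro sum.cong refl)
    fix b assume "b \<in> A"
    have "(\<Sum>r\<in>{r. r permutes S}. h b (transpose q b (r q')))
        = fact (card S - 1) * (\<Sum>c\<in>S. h b (transpose q b c))"
      by (rule sum_permutes_apply[OF finS q'S])
    also have "(\<Sum>c\<in>S. h b (transpose q b c)) = (\<Sum>c\<in>A - {b}. h b c)"
      by (rule sum.reindex_bij_betw[OF image[OF \<open>b \<in> A\<close>]])
    finally show "(\<Sum>r\<in>{r. r permutes S}. h b (transpose q b (r q')))
        = fact (card A - 2) * (\<Sum>c\<in>A - {b}. h b c)" unfolding cS .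
  qed
  finally show ?thesis by (simp add: sum_distrib_left)
qed

lemma Eperm_sum:
  assumes "finite A"
  shows "Eperm N (\<lambda>\<sigma>. \<Sum>p\<in>A. F p \<sigma>) = (\<Sum>p\<in>A. Eperm N (F p))"
  unfolding Eperm_def by (subst sum.swap) (simp add: sum_divide_distrib)

lemma Eperm_cmult: "Eperm N (\<lambda>\<sigma>. c * F \<sigma>) = c * Eperm N F"
  unfolding Eperm_def by (simp add: sum_distrib_left)

lemma Eperm_apply:
  assumes "q < N"
  shows "Eperm N (\<lambda>\<sigma>. f (\<sigma> q)) = (\<Sum>i<N. f i) / real N"
proof -
  have "Eperm N (\<lambda>\<sigma>. f (\<sigma> q)) = fact (N - 1) * (\<Sum>i<N. f i) / fact N"
    unfolding Eperm_def using sum_permutes_apply[of "{..<N}" q f] assms by simp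
  also have "fact N = real N * fact (N - 1)" using assms fact_reduce[of N] by simp
  finally show ?thesis by simp
qed

lemma Eperm_apply2:
  assumes "q < N" "q' < N" "q \<noteq> q'"
  shows "Eperm N (\<lambda>\<sigma>. f (\<sigma> q) (\<sigma> q'))
    = (\<Sum>i<N. \<Sum>j\<in>{..<N} - {i}. f i j) / (real N * (real N - 1))"
proof -
  have N: "N \<ge> 2" using assms by linarith
  have "Eperm N (\<lambda>\<sigma>. f (\<sigma> q) (\<sigma> q'))
      = fact (N - 2) * (\<Sum>i<N. \<Sum>j\<in>{..<N} - {i}. f i j) / fact N"
    unfolding Eperm_def using sum_permutes_apply2[of "{..<N}" q q' f] assms by simp
  also have "fact N = real N * (real N - 1) * fact (N - 2)"
  proof -
    have "fact N = real N * fact (N - 1)" using N fact_reduce[of N] by simp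
    also have "fact (N - 1) = real (N - 1) * (fact (N - 1 - 1) :: real)"
      by (rule fact_reduce) (use N in simp)
    finally show ?thesis using N by (simp add: of_nat_diff numeral_2_eq_2)
  qed
  finally show ?thesis using N by simp
qed

lemma sum_mult_eq_Scov:
  assumes "N \<ge> 2"
  shows "(\<Sum>i<N. Y i p * Y i p')
    = (real N - 1) * Scov N Y p p' + real N * Ybar N Y p * Ybar N Y p'"
proof -
  define a where "a = Ybar N Y p"
  define a' where "a' = Ybar N Y p'"
  have sums: "(\<Sum>i<N. Y i p) = real N * a" "(\<Sum>i<N. Y i p') = real N * a'"
    unfolding a_def a'_def Ybar_def using assms by simp_all
  have "(real N - 1) * Scov N Y p p' = (\<Sum>i<N. (Y i p - a) * (Y i p' - a'))"
    unfolding Scov_def a_def a'_def using assms by simp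
  also have "\<dots> = (\<Sum>i<N. Y i p * Y i p') - a' * (\<Sum>i<N. Y i p) - a * (\<Sum>i<N. Y i p')
      + real N * a * a'"
    by (simp add: algebra_simps sum.distrib sum_subtractf sum_distrib_left)
  finally show ?thesis unfolding sums a_def a'_def by (simp add: algebra_simps)
qed

lemma Eperm_obs_mult:
  assumes N: "N \<ge> 2" and p: "p < N" and p': "p' < N"
  shows "Eperm N (\<lambda>\<sigma>. obs Y \<sigma> p * obs Y \<sigma> p') = Ybar N Y p * Ybar N Y p'
     + (if p = p' then Scov N Y p p else 0) - Scov N Y p p' / real N"
proof (cases "p = p'")
  case True
  have "Eperm N (\<lambda>\<sigma>. obs Y \<sigma> p * obs Y \<sigma> p') = (\<Sum>i<N. Y i p * Y i p) / real N"
    unfolding obs_def True using Eperm_apply[OF p', of "\<lambda>i. Y i p' * Y i p'"] by simp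
  then show ?thesis using True N sum_mult_eq_Scov[OF N, of Y p p] by (simp add: field_simps)
next
  case False
  define a where "a = Ybar N Y p"
  define a' where "a' = Ybar N Y p'"
  have sum_a': "(\<Sum>i<N. Y i p') = real N * a'" unfolding a'_def Ybar_def using N by simp
  have "Eperm N (\<lambda>\<sigma>. obs Y \<sigma> p * obs Y \<sigma> p')
      = (\<Sum>i<N. \<Sum>j\<in>{..<N} - {i}. Y i p * Y j p') / (real N * (real N - 1))"
    unfolding obs_def using Eperm_apply2[OF p p' False, of "\<lambda>i j. Y i p * Y j p'"] by simp
  \<comment> \<open>the off-diagonal sum is the full product sum minus its diagonal\<close>
  also have "(\<Sum>i<N. \<Sum>j\<in>{..<N} - {i}. Y i p * Y j p')
      = (\<Sum>i<N. Y i p * (real N * a') - Y i p * Y i p')"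
    using sum_a' by (intro sum.cong refl) (simp add: sum_distrib_left[symmetric] sum_diff1 algebra_simps)
  also have "\<dots> = real N * a * (real N * a') - ((real N - 1) * Scov N Y p p' + real N * a * a')"
    unfolding sum_subtractf sum_mult_eq_Scov[OF N] a_def a'_def
    by (simp add: sum_distrib_right[symmetric] Ybar_def)
  also have "\<dots> / (real N * (real N - 1)) = a * a' - Scov N Y p p' / real N"
    using N by (simp add: field_simps)
  finally show ?thesis using False unfolding a_def a'_def by simp
qed

lemma Eperm_square_linear_comb:
  assumes fin: "finite A" and A: "A \<subseteq> {..<N}" and N: "N \<ge> 2"
  shows "Eperm N (\<lambda>\<sigma>. (\<Sum>p\<in>A. c p * obs Y \<sigma> p)\<^sup>2)
    = (\<Sum>p\<in>A. c p * Ybar N Y p)\<^sup>2 + (\<Sum>p\<in>A. (c p)\<^sup>2 * Scov N Y p p)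
      - quad_form (Scov N Y) A c / real N"
proof -
  have "Eperm N (\<lambda>\<sigma>. (\<Sum>p\<in>A. c p * obs Y \<sigma> p)\<^sup>2)
      = Eperm N (\<lambda>\<sigma>. \<Sum>p\<in>A. \<Sum>p'\<in>A. c p * c p' * (obs Y \<sigma> p * obs Y \<sigma> p'))"
    by (simp add: power2_eq_square sum_product algebra_simps)
  also have "\<dots> = (\<Sum>p\<in>A. \<Sum>p'\<in>A. c p * c p' * Eperm N (\<lambda>\<sigma>. obs Y \<sigma> p * obs Y \<sigma> p'))"
    by (simp add: Eperm_sum[OF fin] Eperm_cmult)
  also have "\<dots> = (\<Sum>p\<in>A. \<Sum>p'\<in>A. (c p * Ybar N Y p) * (c p' * Ybar N Y p')
      + (if p' = p then (c p)\<^sup>2 * Scov N Y p p else 0) - c p * (Scov N Y p p' * c p') / real N)"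
    using A by (intro sum.cong refl)
      (auto simp: Eperm_obs_mult[OF N] subset_eq algebra_simps power2_eq_square)
  also have "\<dots> = (\<Sum>p\<in>A. c p * Ybar N Y p)\<^sup>2 + (\<Sum>p\<in>A. (c p)\<^sup>2 * Scov N Y p p)
      - quad_form (Scov N Y) A c / real N"
  proof -
    have "(\<Sum>p\<in>A. \<Sum>p'\<in>A. (c p * Ybar N Y p) * (c p' * Ybar N Y p'))
        = (\<Sum>p\<in>A. c p * Ybar N Y p)\<^sup>2"
      by (simp add: power2_eq_square sum_product)
    moreover have "(\<Sum>p\<in>A. \<Sum>p'\<in>A. if p' = p then (c p)\<^sup>2 * Scov N Y p p else 0)
        = (\<Sum>p\<in>A. (c p)\<^sup>2 * Scov N Y p p)"
      using fin by simp
    moreover have "(\<Sum>p\<in>A. \<Sum>p'\<in>A. c p * (Scov N Y p p' * c p') / real N)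
        = quad_form (Scov N Y) A c / real N"
      by (simp add: quad_form_def sum_divide_distrib sum_distrib_left)
    ultimately show ?thesis by (simp add: sum.distrib sum_subtractf)
  qed
  finally show ?thesis .
qed

section \<open>Covariance bounds\<close>

lemma quad_form_Scov_eq:
  "quad_form (Scov N Y) A d
    = (\<Sum>i<N. (\<Sum>p\<in>A. d p * (Y i p - Ybar N Y p))\<^sup>2) / (real N - 1)"
proof -
  let ?Z = "\<lambda>i p. d p * (Y i p - Ybar N Y p)"
  have "quad_form (Scov N Y) A d = (\<Sum>p\<in>A. \<Sum>p'\<in>A. \<Sum>i<N. ?Z i p * ?Z i p') / (real N - 1)"
    unfolding quad_form_def Scov_def
    by (simp add: sum_divide_distrib sum_distrib_left algebra_simps)
  also have "(\<Sum>p\<in>A. \<Sum>p'\<in>A. \<Sum>i<N. ?Z i p * ?Z i p') = (\<Sum>i<N. \<Sum>p\<in>A. \<Sum>p'\<in>A. ?Z i p * ?Z i p')"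
    by (subst sum.swap) (subst (2) sum.swap, rule refl)
  also have "\<dots> = (\<Sum>i<N. (\<Sum>p\<in>A. ?Z i p)\<^sup>2)"
    by (simp add: power2_eq_square sum_product)
  finally show ?thesis .
qed

lemma Scov_diag_eq: "Scov N Y p p = (\<Sum>i<N. (Y i p - Ybar N Y p)\<^sup>2) / (real N - 1)"
  unfolding Scov_def by (simp add: power2_eq_square)

lemma quad_form_Scov_ones_le_card:
  assumes "finite A" "N \<ge> 2"
  shows "quad_form (Scov N Y) A (\<lambda>_. 1) \<le> real (card A) * (\<Sum>p\<in>A. Scov N Y p p)"
proof -
  let ?Z = "\<lambda>i p. Y i p - Ybar N Y p"
  have "(\<Sum>i<N. (\<Sum>p\<in>A. ?Z i p)\<^sup>2) \<le> (\<Sum>i<N. real (card A) * (\<Sum>p\<in>A. (?Z i p)\<^sup>2))"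
    by (intro sum_mono) (metis sum_squared_le_sum_of_squares mult.commute)
  also have "\<dots> = real (card A) * (\<Sum>p\<in>A. \<Sum>i<N. (?Z i p)\<^sup>2)"
    by (simp add: sum_distrib_left[symmetric] sum.swap[of _ "{..<N}" A])
  finally show ?thesis
    using assms unfolding quad_form_Scov_eq Scov_diag_eq
    by (simp add: divide_right_mono sum_divide_distrib[symmetric])
qed

lemma Scorr_sym: "Scorr N Y p p' = Scorr N Y p' p"
  unfolding Scorr_def Scov_def by (simp add: mult.commute)

text \<open>The Rayleigh quotient of the correlation matrix at the vector of standard deviations
  is a ratio of sums of covariances.\<close>

lemma quad_form_Scov_ones_le_Max_eigenvalue:
  assumes fin: "finite g" and "g \<noteq> {}" and "A \<subseteq> g" and pos: "\<And>p. p \<in> A \<Longrightarrow> Scov N Y p p > 0"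
  shows "quad_form (Scov N Y) A (\<lambda>_. 1)
    \<le> Max (eigenvalues_on g (Scorr N Y)) * (\<Sum>p\<in>A. Scov N Y p p)"
proof -
  define x where "x = (\<lambda>p. if p \<in> A then sqrt (Scov N Y p p) else 0)"
  have "quad_form (Scorr N Y) g x = quad_form (Scorr N Y) A x"
    using assms by (intro quad_form_eq_on_support) (auto simp: x_def)
  also have "\<dots> = quad_form (Scov N Y) A (\<lambda>_. 1)"
  proof -
    have "sqrt (Scov N Y p p) * (Scorr N Y p p' * sqrt (Scov N Y p' p')) = Scov N Y p p'"
      if "p \<in> A" "p' \<in> A" for p p'
      using pos[OF that(1)] pos[OF that(2)] by (simp add: Scorr_def real_sqrt_mult field_simps)
    then show ?thesis
      unfolding quad_form_def by (auto simp: x_def sum_distrib_left intro!: sum.cong)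
  qed
  finally have "quad_form (Scov N Y) A (\<lambda>_. 1) = quad_form (Scorr N Y) g x" ..
  also have "\<dots> \<le> Max (eigenvalues_on g (Scorr N Y)) * (\<Sum>p\<in>g. (x p)\<^sup>2)"
    using assms Scorr_sym by (intro quad_form_le_Max_eigenvalues_on) auto
  also have "(\<Sum>p\<in>g. (x p)\<^sup>2) = (\<Sum>p\<in>A. Scov N Y p p)"
    using assms pos by (intro sum.mono_neutral_cong_right) (auto simp: x_def less_imp_le)
  finally show ?thesis .
qed

definition contrast :: "nat set \<Rightarrow> nat \<Rightarrow> nat \<Rightarrow> real" where
  "contrast g q p = of_bool (p = q) - 1 / real (card g)"

lemma sum_contrast_mult:
  assumes "finite g" "q \<in> g"
  shows "(\<Sum>p\<in>g. contrast g q p * f p) = f q - (\<Sum>p\<in>g. f p) / real (card g)"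
  using assms by (simp add: contrast_def left_diff_distrib sum_subtractf sum_divide_distrib
      of_bool_def if_distrib[of "\<lambda>z. z * _"] cong: if_cong)

lemma sum_contrast_sq_Scov:
  assumes "finite g" "q \<in> g"
  shows "(\<Sum>p\<in>g. (contrast g q p)\<^sup>2 * Scov N Y p p)
    = (1 - 1 / real (card g))\<^sup>2 * Scov N Y q q + (\<Sum>p\<in>g - {q}. Scov N Y p p) / (real (card g))\<^sup>2"
proof -
  have "(\<Sum>p\<in>g - {q}. (contrast g q p)\<^sup>2 * Scov N Y p p)
      = (\<Sum>p\<in>g - {q}. Scov N Y p p / (real (card g))\<^sup>2)"
    by (intro sum.cong refl) (auto simp: contrast_def power_divide)
  then show ?thesis
    using assms by (simp add: sum.remove[of g q] contrast_def sum_divide_distrib)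
qed

lemma quad_form_contrast_Scov_le:
  assumes fin: "finite g" and q: "q \<in> g" and N: "N \<ge> 2"
  defines "m \<equiv> real (card g)"
  shows "quad_form (Scov N Y) g (contrast g q)
    \<le> 2 * (1 - 1/m)\<^sup>2 * Scov N Y q q + 2 * quad_form (Scov N Y) (g - {q}) (\<lambda>_. 1) / m\<^sup>2"
proof -
  let ?Z = "\<lambda>i p. Y i p - Ybar N Y p"
  have split: "(\<Sum>p\<in>g. contrast g q p * ?Z i p) = (1 - 1/m) * ?Z i q + (- 1/m) * (\<Sum>p\<in>g - {q}. ?Z i p)" for i
  proof -
    have "(\<Sum>p\<in>g - {q}. contrast g q p * ?Z i p) = (\<Sum>p\<in>g - {q}. (- 1/m) * ?Z i p)"
      by (intro sum.cong refl) (auto simp: contrast_def m_def)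
    then show ?thesis
      using fin q by (simp add: sum.remove[of g q] contrast_def m_def sum_distrib_left)
  qed
  have sq: "(a + b)\<^sup>2 \<le> 2 * a\<^sup>2 + 2 * b\<^sup>2" for a b :: real
    using zero_le_power2[of "a - b"] by (simp add: power2_eq_square algebra_simps)
  have "(\<Sum>i<N. (\<Sum>p\<in>g. contrast g q p * ?Z i p)\<^sup>2)
      \<le> (\<Sum>i<N. 2 * (1 - 1/m)\<^sup>2 * (?Z i q)\<^sup>2 + 2 / m\<^sup>2 * (\<Sum>p\<in>g - {q}. ?Z i p)\<^sup>2)"
    unfolding split
    by (intro sum_mono order_trans[OF sq]) (simp add: power_mult_distrib power_divide)
  also have "\<dots> = 2 * (1 - 1/m)\<^sup>2 * (\<Sum>i<N. (?Z i q)\<^sup>2)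
      + 2 / m\<^sup>2 * (\<Sum>i<N. (\<Sum>p\<in>g - {q}. ?Z i p)\<^sup>2)"
    by (simp add: sum.distrib sum_distrib_left)
  finally have "(\<Sum>i<N. (\<Sum>p\<in>g. contrast g q p * ?Z i p)\<^sup>2) / (real N - 1)
      \<le> (2 * (1 - 1/m)\<^sup>2 * (\<Sum>i<N. (?Z i q)\<^sup>2)
          + 2 / m\<^sup>2 * (\<Sum>i<N. (\<Sum>p\<in>g - {q}. ?Z i p)\<^sup>2)) / (real N - 1)"
    using N by (simp add: divide_right_mono)
  then show ?thesis
    unfolding quad_form_Scov_eq[of N Y g] quad_form_Scov_eq[of N Y "g - {q}"] Scov_diag_eq
    by (simp add: add_divide_distrib mult.commute)
qed

section \<open>The group-mean estimator and its variance estimator\<close>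

lemma grouping_memberD:
  assumes "grouping N P" "g \<in> P"
  shows "g \<subseteq> {..<N}" "finite g" "card g \<ge> 2" "N \<ge> 2"
proof -
  show g: "g \<subseteq> {..<N}" "card g \<ge> 2" using assms unfolding grouping_def by blast+
  then show "finite g" by (metis card.infinite not_numeral_le_zero)
  show "N \<ge> 2" using g card_mono[OF finite_lessThan g(1)] by simp
qed

lemma Eperm_Yhat_grp:
  assumes "finite g" "g \<subseteq> {..<N}"
  shows "Eperm N (Yhat_grp Y g) = Ybar_grp N Y g"
proof -
  have "Eperm N (Yhat_grp Y g) = (\<Sum>q\<in>g. Eperm N (\<lambda>\<sigma>. Y (\<sigma> q) q)) / real (card g)"
    unfolding Yhat_grp_def obs_def divide_inverse mult.commute[of _ "inverse _"]
    by (simp add: Eperm_cmult Eperm_sum[OF assms(1)])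
  also have "(\<Sum>q\<in>g. Eperm N (\<lambda>\<sigma>. Y (\<sigma> q) q)) = (\<Sum>q\<in>g. Ybar N Y q)"
    using assms by (intro sum.cong refl) (auto simp: Ybar_def intro: Eperm_apply)
  finally show ?thesis unfolding Ybar_grp_def .
qed

lemma Eperm_Vhat_eq:
  assumes fin: "finite g" and q: "q \<in> g" and g: "g \<subseteq> {..<N}" and N: "N \<ge> 2"
  shows "Eperm N (Vhat N Y g q) = mu_grp N g * ((Ybar N Y q - Ybar_grp N Y g)\<^sup>2
    + (\<Sum>p\<in>g. (contrast g q p)\<^sup>2 * Scov N Y p p) - quad_form (Scov N Y) g (contrast g q) / real N)"
proof -
  have "Vhat N Y g q = (\<lambda>\<sigma>. mu_grp N g * (\<Sum>p\<in>g. contrast g q p * obs Y \<sigma> p)\<^sup>2)"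
    unfolding Vhat_def sum_contrast_mult[OF fin q] Yhat_grp_def ..
  then have "Eperm N (Vhat N Y g q)
      = mu_grp N g * Eperm N (\<lambda>\<sigma>. (\<Sum>p\<in>g. contrast g q p * obs Y \<sigma> p)\<^sup>2)"
    by (simp add: Eperm_cmult)
  then show ?thesis
    unfolding Eperm_square_linear_comb[OF fin g N] sum_contrast_mult[OF fin q, of "Ybar N Y"]
      Ybar_grp_def .
qed

lemma Vhat_bound_arith:
  fixes N m mu Q Sq K Sp rho T D :: real
  assumes N: "N \<ge> 3" and m: "m \<ge> 2" and mu: "mu = inverse ((1 - 2 / N) * (1 - 1 / m)\<^sup>2)"
    and Q: "Q \<le> 2 * (1 - 1/m)\<^sup>2 * Sq + 2 * K / m\<^sup>2"
    and K: "2 * K \<le> (rho + m - 1) * Sp"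
    and T: "T = (1 - 1/m)\<^sup>2 * Sq + Sp / m\<^sup>2"
  shows "mu * (D\<^sup>2 + T - Q / N) \<ge> Sq + mu / m\<^sup>2 * (1 - rho / N - (m - 1) / N) * Sp + mu * D\<^sup>2"
proof -
  have pos: "1 - 2 / N > 0" "(1 - 1 / m)\<^sup>2 > 0" using N m by (simp_all add: field_simps)
  then have "mu > 0" unfolding mu by simp
  have mu_inv: "mu * ((1 - 2 / N) * (1 - 1 / m)\<^sup>2) = 1"
    unfolding mu by (rule left_inverse) (use pos in auto)
  have "Q \<le> 2 * (1 - 1/m)\<^sup>2 * Sq + (rho + m - 1) * Sp / m\<^sup>2"
    using Q K m by (smt (verit) divide_right_mono zero_le_power2)
  then have "Q / N \<le> (2 * (1 - 1/m)\<^sup>2 * Sq + (rho + m - 1) * Sp / m\<^sup>2) / N"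
    using N by (simp add: divide_right_mono)
  also have "\<dots> = T - ((1 - 1/m)\<^sup>2 * Sq * (1 - 2 / N) + Sp / m\<^sup>2 * (1 - rho / N - (m - 1) / N))"
    unfolding T using N m by (simp add: field_simps)
  finally have "mu * ((1 - 1/m)\<^sup>2 * Sq * (1 - 2 / N) + Sp / m\<^sup>2 * (1 - rho / N - (m - 1) / N))
      \<le> mu * (T - Q / N)"
    using \<open>mu > 0\<close> by (simp add: mult_left_mono)
  also have "mu * ((1 - 1/m)\<^sup>2 * Sq * (1 - 2 / N) + Sp / m\<^sup>2 * (1 - rho / N - (m - 1) / N))
     = Sq * (mu * ((1 - 2 / N) * (1 - 1 / m)\<^sup>2)) + mu / m\<^sup>2 * (1 - rho / N - (m - 1) / N) * Sp"
    by (simp add: algebra_simps)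
  finally show ?thesis unfolding mu_inv by (simp add: algebra_simps)
qed

lemma Eperm_Vhat_ge:
  assumes pos: "\<And>p. p \<in> g \<Longrightarrow> Scov N Y p p > 0" and g: "g \<subseteq> {..<N}" and fin: "finite g"
    and card: "card g \<ge> 2" and q: "q \<in> g" and N: "N \<ge> 3"
  shows "Eperm N (Vhat N Y g q)
    \<ge> Scov N Y q q + Omega N Y g q + mu_grp N g * (Ybar N Y q - Ybar_grp N Y g)\<^sup>2"
proof -
  have "N \<ge> 2" using N by simp
  define m where "m = real (card g)"
  define K where "K = quad_form (Scov N Y) (g - {q}) (\<lambda>_. 1)"
  define Sp where "Sp = (\<Sum>p\<in>g - {q}. Scov N Y p p)"
  have "K \<le> (m - 1) * Sp"
    using quad_form_Scov_ones_le_card[of "g - {q}" N Y] fin q N card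
    unfolding K_def Sp_def m_def by (simp add: of_nat_diff Suc_le_eq)
  moreover have "K \<le> rho_grp N Y g * Sp"
    using quad_form_Scov_ones_le_Max_eigenvalue[OF fin _ _ pos] q
    unfolding K_def Sp_def rho_grp_def by blast
  ultimately have K: "2 * K \<le> (rho_grp N Y g + m - 1) * Sp" by (simp add: algebra_simps)
  have Q: "quad_form (Scov N Y) g (contrast g q) \<le> 2 * (1 - 1/m)\<^sup>2 * Scov N Y q q + 2 * K / m\<^sup>2"
    using quad_form_contrast_Scov_le[OF fin q] N unfolding K_def m_def by simp
  have mu: "mu_grp N g = inverse ((1 - 2 / real N) * (1 - 1 / m)\<^sup>2)"
    unfolding mu_grp_def m_def ..
  have "Scov N Y q q + mu_grp N g / m\<^sup>2 * (1 - rho_grp N Y g / N - (m - 1) / N) * Sp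
      + mu_grp N g * (Ybar N Y q - Ybar_grp N Y g)\<^sup>2 \<le> Eperm N (Vhat N Y g q)"
    unfolding Eperm_Vhat_eq[OF fin q g \<open>N \<ge> 2\<close>]
    by (rule Vhat_bound_arith[OF _ _ mu Q K
          sum_contrast_sq_Scov[OF fin q, where N = N and Y = Y, folded m_def Sp_def]])
      (use N card in \<open>simp_all add: m_def\<close>)
  then show ?thesis unfolding Omega_def m_def Sp_def by simp
qed

lemma Omega_nonneg:
  assumes N: "N \<ge> 2" and pos: "\<And>p. p \<in> g - {q} \<Longrightarrow> Scov N Y p p \<ge> 0"
    and cond: "real N - rho_grp N Y g - (real (card g) - 1) \<ge> 0"
  shows "Omega N Y g q \<ge> 0"
proof -
  have "1 - 2 / real N \<ge> 0" using N by (simp add: field_simps)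
  then have "mu_grp N g \<ge> 0" unfolding mu_grp_def by simp
  moreover have "1 - rho_grp N Y g / real N - (real (card g) - 1) / real N
      = (real N - rho_grp N Y g - (real (card g) - 1)) / real N"
    using N by (simp add: field_simps)
  then have "1 - rho_grp N Y g / real N - (real (card g) - 1) / real N \<ge> 0"
    using cond by simp
  moreover have "(\<Sum>p\<in>g - {q}. Scov N Y p p) \<ge> 0" using pos by (rule sum_nonneg)
  ultimately show ?thesis unfolding Omega_def by simp
qed

lemma Scov_two_units_square: "(Scov 2 Y p p')\<^sup>2 = Scov 2 Y p p * Scov 2 Y p' p'"
  by (simp add: Scov_def Ybar_def numeral_2_eq_2 lessThan_Suc power2_eq_square field_simps)

lemma rho_grp_two_units_gt_1:
  assumes pos: "\<And>q. q < 2 \<Longrightarrow> Scov 2 Y q q > 0" and g: "g \<subseteq> {..<2}" and card: "card g \<ge> 2"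
  shows "rho_grp 2 Y g > 1"
proof -
  have "g \<subseteq> {0, 1}" using g by auto
  moreover from this have "card g = card {0, 1::nat}"
    using card card_mono[of "{0, 1}" g] by simp
  ultimately have g_eq: "g = {0, 1}" by (simp add: card_subset_eq)
  define r where "r = Scorr 2 Y 0 1"
  have S: "Scov 2 Y 0 0 > 0" "Scov 2 Y 1 1 > 0" using pos by auto
  then have "(Scov 2 Y 0 1)\<^sup>2 > 0" unfolding Scov_two_units_square by simp
  then have "r \<noteq> 0" unfolding r_def Scorr_def using S by auto
  have diag: "Scorr 2 Y 0 0 = 1" "Scorr 2 Y 1 1 = 1"
    using S unfolding Scorr_def by simp_all
  define x where "x = (\<lambda>i::nat. if i = 0 then 1 else sgn r)"
  have "quad_form (Scorr 2 Y) g x = 2 + 2 * \<bar>r\<bar>"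
    unfolding g_eq quad_form_def x_def using diag Scorr_sym[of 2 Y 1 0] \<open>r \<noteq> 0\<close>
    by (simp add: r_def sgn_if abs_if)
  moreover have "quad_form (Scorr 2 Y) g x \<le> rho_grp 2 Y g * (\<Sum>p\<in>g. (x p)\<^sup>2)"
    unfolding rho_grp_def g_eq using Scorr_sym by (intro quad_form_le_Max_eigenvalues_on) auto
  moreover have "(\<Sum>p\<in>g. (x p)\<^sup>2) = 2"
    unfolding g_eq x_def using \<open>r \<noteq> 0\<close> by (simp add: sgn_if)
  ultimately show ?thesis using \<open>r \<noteq> 0\<close> by simp
qed

theorem lemma2:
  fixes N :: nat and Y :: "nat \<Rightarrow> nat \<Rightarrow> real" and P :: "nat set set"
  assumes "\<forall>q<N. Scov N Y q q > 0"
    and "grouping N P"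
  shows "(\<forall>g\<in>P. Eperm N (Yhat_grp Y g) = Ybar_grp N Y g)
    \<and> (condition5 N Y P \<longrightarrow>
        (\<forall>g\<in>P. \<forall>q\<in>g.
           Eperm N (Vhat N Y g q) \<ge> Scov N Y q q + Omega N Y g q
              + mu_grp N g * (Ybar N Y q - Ybar_grp N Y g)\<^sup>2
           \<and> Omega N Y g q \<ge> 0))"
proof (intro conjI ballI impI)
  fix g assume "g \<in> P"
  note g = grouping_memberD[OF assms(2) this]
  show "Eperm N (Yhat_grp Y g) = Ybar_grp N Y g" by (rule Eperm_Yhat_grp[OF g(2,1)])
  fix q assume "condition5 N Y P" "q \<in> g"
  have cond: "real N - rho_grp N Y g - (real (card g) - 1) \<ge> 0"
    using \<open>condition5 N Y P\<close> \<open>g \<in> P\<close> unfolding condition5_def by blast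
  have pos: "Scov N Y p p > 0" if "p \<in> g" for p using assms(1) g(1) that by auto
  show "Omega N Y g q \<ge> 0"
    using Omega_nonneg[OF g(4) _ cond] pos by (simp add: less_imp_le)
  have "N \<noteq> 2"
    using rho_grp_two_units_gt_1[of Y g] assms(1) g cond by auto
  then show "Eperm N (Vhat N Y g q)
      \<ge> Scov N Y q q + Omega N Y g q + mu_grp N g * (Ybar N Y q - Ybar_grp N Y g)\<^sup>2"
    using Eperm_Vhat_ge[OF pos g(1,2,3) \<open>q \<in> g\<close>] g(4) by simp
qed

end
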